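(* Let $a\in C^\infty(\mathbb{R})$ satisfy condition (A) and $\beta\in\mathbb{R}$. Then for every $f\in L^2(\mathbb{T})$ with $E^a_0(f)<\infty$, \[ |E^a_1(f)|\lesssim\|f\|_{L^2}^2\,E^a_0(f), \] with implicit constant depending only on $\beta$ and the constants in (A).
   Context: $\mathbb{T}=\mathbb{R}/2\pi\mathbb{Z}$; for $f$ on $\mathbb{T}$, $\hat f(\xi)$, $\xi\in\mathbb{Z}$, are its Fourier coefficients (so $\|f\|_{L^2}^2$ is comparable to $\sum_\xi|\hat f(\xi)|^2$), and $\hat{\bar f}(\xi)=\overline{\hat f(-\xi)}$. Condition (A) on $a$: $a$ positive, even, non-decreasing on $[0,\infty)$, constant on $[-1,1]$; $a(2\xi)\lesssim a(\xi)$ for $\xi>0$; $a(N_1)/a(N_2)\gtrsim(N_1/N_2)^{1/2}$ for dyadic $N_1>N_2\ge1$; $|\partial_\xi^ja(\xi)|\lesssim\langle\xi\rangle^{-j}a(\xi)$ for $1\le j\le5$. Notation $\xi_{ij\ldots}=\xi_i+\xi_j+\cdots$; $\Gamma_m=\{(\xi_1,\dots,\xi_m):\xi_{1\cdots m}=0\}$. Let $q$ be the smooth positive function on $\mathbb{R}^2$ with $q(\xi_1,\xi_2)=\int_0^1(\xi a(\xi))'(-\xi_2+\xi_{12}t)\,dt$ (equal to $(\xi_1a(\xi_1)+\xi_2a(\xi_2))/\xi_{12}$ when $\xi_{12}\ne0$). On $\Gamma_4\subset\mathbb{R}^4$ define \[ b^a_4(\xi_1,\xi_2,\xi_3,\xi_4):=\frac{i\beta\,\xi_{23}}{4}\,\frac{\big[\int_0^1(\partial_1q-\partial_2q)(\xi_1+\xi_{23}t,\xi_2-\xi_{23}t)\,dt\big]^2}{\big[\sqrt{q(\xi_1,\xi_2)}+\sqrt{q(\xi_3,\xi_4)}\big]^2},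 \] which for $\xi_{12}\xi_{23}\ne0$ equals $-\frac{\beta}{2}\big[\sqrt{|\xi_1a(\xi_1)+\xi_2a(\xi_2)|}-\sqrt{|\xi_3a(\xi_3)+\xi_4a(\xi_4)|}\big]^2/\big(2i\xi_{12}\xi_{23}\mathrm{sgn}(\xi_{12})\big)$. Define $E^a_0(f):=\sum_{\xi\in\mathbb{Z}}a(\xi)|\hat f(\xi)|^2=\|\sqrt{a(D)}f\|_{L^2}^2$ and \[ E^a_1(f):=\sum_{\substack{(\xi_1,\dots,\xi_4)\in\Gamma_4\cap\mathbb{Z}^4\\ \xi_{12}\xi_{23}\ne0}}b^a_4(\xi_1,\xi_2,\xi_3,\xi_4)\,\mathrm{sgn}(\xi_{12})\,\hat f(\xi_1)\hat{\bar f}(\xi_2)\hat f(\xi_3)\hat{\bar f}(\xi_4). \] *)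

theory Defs
  imports "HOL-Analysis.Analysis"
begin

definition jbr :: "real \<Rightarrow> real" where
  "jbr x = sqrt (1 + x\<^sup>2)"

definition smooth_fun :: "(real \<Rightarrow> real) \<Rightarrow> bool" where
  "smooth_fun a \<longleftrightarrow> (\<forall>n x. ((deriv ^^ n) a) differentiable (at x))"

text \<open>Condition (A), with all implicit constants bounded by one constant K.\<close>
definition condA :: "real \<Rightarrow> (real \<Rightarrow> real) \<Rightarrow> bool" where
  "condA K a \<longleftrightarrow>
     (\<forall>x. a x > 0) \<and>
     (\<forall>x. a (- x) = a x) \<and>
     mono_on {0..} a \<and>
     (\<forall>x\<in>{-1..1}. a x = a 0) \<and>
     (\<forall>x>0. a (2 * x) \<le> K * a x) \<and>
     (\<forall>k1 k2::nat. k1 > k2 \<longrightarrow>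
        a (2 ^ k1) / a (2 ^ k2) \<ge> (1 / K) * sqrt ((2 ^ k1) / (2 ^ k2))) \<and>
     (\<forall>j\<in>{1..5::nat}. \<forall>x. \<bar>(deriv ^^ j) a x\<bar> \<le> K * jbr x powr (- real j) * a x)"

definition qfun :: "(real \<Rightarrow> real) \<Rightarrow> real \<Rightarrow> real \<Rightarrow> real" where
  "qfun a x1 x2 = integral {0..1} (\<lambda>t. deriv (\<lambda>x. x * a x) (- x2 + (x1 + x2) * t))"

definition dqfun :: "(real \<Rightarrow> real) \<Rightarrow> real \<Rightarrow> real \<Rightarrow> real" where
  "dqfun a x1 x2 = deriv (\<lambda>s. qfun a s x2) x1 - deriv (\<lambda>s. qfun a x1 s) x2"

definition b4 :: "real \<Rightarrow> (real \<Rightarrow> real) \<Rightarrow> real \<Rightarrow> real \<Rightarrow> real \<Rightarrow> real \<Rightarrow> complex" where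
  "b4 \<beta> a x1 x2 x3 x4 =
     \<i> * complex_of_real (\<beta> * (x2 + x3) / 4 *
       (integral {0..1} (\<lambda>t. dqfun a (x1 + (x2 + x3) * t) (x2 - (x2 + x3) * t)))\<^sup>2
       / (sqrt (qfun a x1 x2) + sqrt (qfun a x3 x4))\<^sup>2)"

definition Gamma4 :: "(int \<times> int \<times> int \<times> int) set" where
  "Gamma4 = {(x1, x2, x3, x4). x1 + x2 + x3 + x4 = 0 \<and> (x1 + x2) * (x2 + x3) \<noteq> 0}"

text \<open>Fourier coefficients of the conjugate: hat(bar f)(xi) = conj(hat f(-xi)).\<close>
definition conj_hat :: "(int \<Rightarrow> complex) \<Rightarrow> int \<Rightarrow> complex" where
  "conj_hat fc \<xi> = cnj (fc (- \<xi>))"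

definition E1_summand :: "real \<Rightarrow> (real \<Rightarrow> real) \<Rightarrow> (int \<Rightarrow> complex) \<Rightarrow> int \<times> int \<times> int \<times> int \<Rightarrow> complex" where
  "E1_summand \<beta> a fc = (\<lambda>(x1, x2, x3, x4).
     b4 \<beta> a (of_int x1) (of_int x2) (of_int x3) (of_int x4) * of_int (sgn (x1 + x2))
       * fc x1 * conj_hat fc x2 * fc x3 * conj_hat fc x4)"

definition E1 :: "real \<Rightarrow> (real \<Rightarrow> real) \<Rightarrow> (int \<Rightarrow> complex) \<Rightarrow> complex" where
  "E1 \<beta> a fc = infsum (E1_summand \<beta> a fc) Gamma4"

definition E0 :: "(real \<Rightarrow> real) \<Rightarrow> (int \<Rightarrow> complex) \<Rightarrow> real" where
  "E0 a fc = infsum (\<lambda>\<xi>. a (of_int \<xi>) * (cmod (fc \<xi>))\<^sup>2) UNIV"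

text \<open>Squared L2 norm via Parseval (up to the normalising constant).\<close>
definition L2sq :: "(int \<Rightarrow> complex) \<Rightarrow> real" where
  "L2sq fc = infsum (\<lambda>\<xi>. (cmod (fc \<xi>))\<^sup>2) UNIV"

end

theory Submission
  imports Defs
begin

text \<open>
  On \<open>\<Gamma>\<^sub>4\<close> put \<open>A = q(\<xi>\<^sub>1,\<xi>\<^sub>2)\<close> and \<open>B = q(\<xi>\<^sub>3,\<xi>\<^sub>4)\<close>. The inner integral in \<open>b\<^sub>4\<close> equals \<open>-(A - B)/\<xi>\<^sub>2\<^sub>3\<close>,
  so \<open>|b\<^sub>4| \<le> |\<beta>| (A - B)\<^sup>2 / (4 |\<xi>\<^sub>2\<^sub>3| (A + B))\<close>. With \<open>M = max |\<xi>\<^sub>i|\<close> one has \<open>A + B \<approx> a(M)\<close>,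
  and \<open>A - B\<close> is a second difference of \<open>\<xi> a(\<xi>)\<close>: for \<open>|\<xi>\<^sub>2\<^sub>3| \<le> M/4\<close> the mean value theorem and
  the symbol bounds of (A) give \<open>|A - B| \<lesssim> |\<xi>\<^sub>2\<^sub>3| a(M)/M\<close>, otherwise the trivial bound suffices.
  Hence \<open>|b\<^sub>4| \<lesssim> a(M)/M\<close>. As the frequencies sum to zero, two of them have size \<open>\<ge> M/3\<close>, so by
  the doubling condition \<open>a(M) \<lesssim> a(\<xi>\<^sub>i)\<^sup>1\<^sup>/\<^sup>2 a(\<xi>\<^sub>j)\<^sup>1\<^sup>/\<^sup>2\<close>, while \<open>1/M \<le> 1/max \<langle>\<xi>\<^sub>k\<rangle> \<langle>\<xi>\<^sub>l\<rangle>\<close> for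
  the other two. The resulting quadrilinear sum is controlled by Cauchy-Schwarz in the two heavy
  frequencies and by the Hilbert-type inequality \<open>\<Sum> F(u) F(v) / max \<langle>u\<rangle> \<langle>v\<rangle> \<le> 12 \<Sum> F\<^sup>2\<close>, a Schur test.
\<close>

lemma MVT_between:
  fixes f f' :: "real \<Rightarrow> real"
  assumes "\<And>x. (f has_real_derivative f' x) (at x)"
  shows "\<exists>w. min u v \<le> w \<and> w \<le> max u v \<and> f u - f v = (u - v) * f' w"
proof (cases u v rule: linorder_cases)
  case less
  from MVT2[OF less assms] obtain z where "u < z" "z < v" "f v - f u = (v - u) * f' z" by blast
  then show ?thesis using less by (intro exI[of _ z]) (auto simp: algebra_simps)
next
  case greater
  from MVT2[OF greater assms] obtain z where "v < z" "z < u" "f u - f v = (u - v) * f' z" by blast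
  then show ?thesis using greater by (intro exI[of _ z]) auto
qed auto

lemma integral_unit_interval_eq:
  fixes F f :: "real \<Rightarrow> real"
  assumes "\<And>t. (F has_real_derivative f t) (at t)"
  shows "integral {0..1} f = F 1 - F 0"
proof (rule integral_unique, rule fundamental_theorem_of_calculus)
  show "\<And>t. t \<in> {0..1} \<Longrightarrow> (F has_vector_derivative f t) (at t within {0..1})"
    using assms by (simp add: has_real_derivative_iff_has_vector_derivative[symmetric]
        has_field_derivative_at_within)
qed simp

lemma summable_on_norm_infsum_le:
  fixes f :: "'a \<Rightarrow> 'b::banach"
  assumes "\<And>S. finite S \<Longrightarrow> S \<subseteq> A \<Longrightarrow> (\<Sum>x\<in>S. norm (f x)) \<le> B"
  shows "f summable_on A" "norm (infsum f A) \<le> B"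
proof -
  have norm_summable: "(\<lambda>x. norm (f x)) summable_on A"
    using assms by (intro nonneg_bdd_above_summable_on bdd_aboveI[of _ B]) auto
  then show "f summable_on A" by (rule abs_summable_summable)
  have "norm (infsum f A) \<le> infsum (\<lambda>x. norm (f x)) A"
    using norm_summable by (rule norm_infsum_bound)
  also have "\<dots> \<le> B"
    using norm_summable assms by (intro infsum_le_finite_sums) auto
  finally show "norm (infsum f A) \<le> B" .
qed

lemma inverse_sqrt_sum_le: "(\<Sum>k=1..n. 1 / sqrt (real k)) \<le> 2 * sqrt (real n)"
proof (induction n)
  case (Suc n)
  define s t where "s = sqrt (real n)" and "t = sqrt (real (Suc n))"
  have "t > 0" "t * t = s * s + 1" unfolding s_def t_def by simp_all
  moreover have "2 * s * t \<le> s * s + t * t"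
    using sum_squares_bound[of s t] by (simp add: power2_eq_square)
  ultimately have "1 / t \<le> 2 * t - 2 * s" by (simp add: field_simps)
  with Suc show ?case by (simp add: s_def t_def)
qed simp

lemma inverse_sqrt_cube_tail_le:
  assumes "m \<ge> 1"
  shows "(\<Sum>k=m+1..m+p. 1 / (real k * sqrt (real k))) \<le> 2 / sqrt (real m) - 2 / sqrt (real (m + p))"
proof (induction p)
  case (Suc p)
  define s t where "s = sqrt (real (m + p))" and "t = sqrt (real (m + Suc p))"
  have s0: "s > 0" and "s \<le> t" and tt: "t * t = s * s + 1"
    unfolding s_def t_def using assms by simp_all
  have "s * t * (s + t) \<le> (t * t) * (2 * t)"
    using s0 \<open>s \<le> t\<close> by (intro mult_mono) auto
  then have "1 / (real (m + Suc p) * t) \<le> 2 / (s * t * (s + t))"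
    using s0 \<open>s \<le> t\<close> by (simp add: t_def divide_simps)
  \<comment> \<open>telescoping, since \<open>(t - s) (t + s) = 1\<close>\<close>
  also have "\<dots> = 2 * ((t - s) * (t + s)) / (s * t * (s + t))"
    using tt by (simp add: algebra_simps)
  also have "\<dots> = 2 / s - 2 / t"
    using s0 \<open>s \<le> t\<close> by (simp add: divide_simps add_pos_pos) (simp add: algebra_simps)
  finally have "1 / (real (m + Suc p) * t) \<le> 2 / s - 2 / t" .
  with Suc show ?case by (simp add: s_def t_def)
qed simp

definition schur_weight :: "real \<Rightarrow> nat \<Rightarrow> real" where
  "schur_weight D k = sqrt (D / max (real k) 1) / max D (max (real k) 1)"

lemma schur_weight_nonneg: "D \<ge> 1 \<Longrightarrow> schur_weight D k \<ge> 0"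
  unfolding schur_weight_def by simp

lemma schur_weight_0_le: "D \<ge> 1 \<Longrightarrow> schur_weight D 0 \<le> 1"
  unfolding schur_weight_def using real_sqrt_le_iff[of D "D * D"] by (simp add: divide_simps)

lemma schur_weight_le_inverse_sqrt:
  assumes "D \<ge> 1" "k \<ge> 1"
  shows "schur_weight D k \<le> 1 / sqrt D * (1 / sqrt (real k))"
proof -
  have "schur_weight D k \<le> sqrt (D / real k) / D"
    unfolding schur_weight_def using assms by (simp add: max_absorb1 divide_left_mono)
  also have "\<dots> = 1 / sqrt D * (1 / sqrt (real k))"
    using assms by (simp add: real_sqrt_divide field_simps)
  finally show ?thesis .
qed

lemma schur_weight_le_inverse_sqrt_cube:
  assumes "D \<ge> 1" "k \<ge> 1"
  shows "schur_weight D k \<le> sqrt D * (1 / (real k * sqrt (real k)))"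
proof -
  have "schur_weight D k \<le> sqrt (D / real k) / real k"
    unfolding schur_weight_def using assms by (simp add: max_absorb1 divide_left_mono)
  also have "\<dots> = sqrt D * (1 / (real k * sqrt (real k)))"
    using assms by (simp add: real_sqrt_divide field_simps)
  finally show ?thesis .
qed

lemma schur_weight_sum_le:
  assumes D: "D \<ge> 1"
  shows "(\<Sum>k=0..n. schur_weight D k) \<le> 6"
proof -
  \<comment> \<open>split the sum at \<open>k = \<lfloor>D\<rfloor>\<close>, where the two bounds on the weight cross\<close>
  define m where "m = nat \<lfloor>D\<rfloor>"
  have m1: "m \<ge> 1" using D unfolding m_def by (simp add: le_nat_iff)
  have "real m = of_int \<lfloor>D\<rfloor>" unfolding m_def using D by simp
  then have mD: "real m \<le> D" and Dm: "D \<le> 2 * real m"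
    using m1 floor_correct[of D] by linarith+
  have "(\<Sum>k=1..m. schur_weight D k) \<le> 1 / sqrt D * (\<Sum>k=1..m. 1 / sqrt (real k))"
    unfolding sum_distrib_left using D by (intro sum_mono schur_weight_le_inverse_sqrt) auto
  also have "\<dots> \<le> 1 / sqrt D * (2 * sqrt (real m))"
    using D by (intro mult_left_mono inverse_sqrt_sum_le) simp
  also have "\<dots> \<le> 2"
    using D mD by (simp add: divide_simps)
  finally have head: "(\<Sum>k=1..m. schur_weight D k) \<le> 2" .
  have "(\<Sum>k=m+1..m+n. schur_weight D k) \<le> sqrt D * (\<Sum>k=m+1..m+n. 1 / (real k * sqrt (real k)))"
    unfolding sum_distrib_left using D by (intro sum_mono schur_weight_le_inverse_sqrt_cube) auto
  also have "\<dots> \<le> sqrt D * (2 / sqrt (real m))"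
  proof (rule mult_left_mono)
    show "(\<Sum>k=m+1..m+n. 1 / (real k * sqrt (real k))) \<le> 2 / sqrt (real m)"
      by (rule order_trans[OF inverse_sqrt_cube_tail_le[OF m1]]) (simp del: of_nat_add)
  qed (use D in simp)
  also have "\<dots> \<le> sqrt 2 * sqrt (real m) * (2 / sqrt (real m))"
    using Dm by (intro mult_right_mono) (auto simp: real_sqrt_mult[symmetric])
  also have "\<dots> \<le> 3"
  proof -
    have "sqrt 2 \<le> sqrt (1.5\<^sup>2)" by (subst real_sqrt_le_iff) (simp add: power2_eq_square)
    then show ?thesis using m1 by simp
  qed
  finally have tail: "(\<Sum>k=m+1..m+n. schur_weight D k) \<le> 3" .
  have "(\<Sum>k=0..n. schur_weight D k) \<le> (\<Sum>k=0..m+n. schur_weight D k)"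
    using D by (intro sum_mono2) (auto simp: schur_weight_nonneg)
  also have "\<dots> = schur_weight D 0 + (\<Sum>k=1..m+n. schur_weight D k)"
    by (simp add: sum.atLeast_Suc_atMost)
  also have "(\<Sum>k=1..m+n. schur_weight D k) = (\<Sum>k=1..m. schur_weight D k) + (\<Sum>k=m+1..m+n. schur_weight D k)"
    using m1 by (intro sum.ub_add_nat) simp
  finally show ?thesis using schur_weight_0_le[OF D] head tail by linarith
qed

definition int_bracket :: "int \<Rightarrow> real" where
  "int_bracket x = max \<bar>real_of_int x\<bar> 1"

definition bracket_max :: "int \<Rightarrow> int \<Rightarrow> real" where
  "bracket_max u v = max (int_bracket u) (int_bracket v)"

lemma int_bracket_ge_1: "int_bracket x \<ge> 1"
  unfolding int_bracket_def by simp

lemma bracket_max_pos: "bracket_max u v > 0"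
  unfolding bracket_max_def using int_bracket_ge_1[of u] by simp

lemma bracket_max_commute: "bracket_max u v = bracket_max v u"
  unfolding bracket_max_def by (simp add: max.commute)

lemma sum_schur_weight_int_le:
  assumes "finite V" "D \<ge> 1"
  shows "(\<Sum>v\<in>V. schur_weight D (nat \<bar>v\<bar>)) \<le> 12"
proof -
  define n where "n = (\<Sum>v\<in>V. nat \<bar>v\<bar>)"
  have half: "(\<Sum>v\<in>V'. schur_weight D (nat \<bar>v\<bar>)) \<le> 6"
    if "V' \<subseteq> V" "inj_on (\<lambda>v. nat \<bar>v\<bar>) V'" for V'
  proof -
    have "(\<Sum>v\<in>V'. schur_weight D (nat \<bar>v\<bar>)) = (\<Sum>k\<in>(\<lambda>v. nat \<bar>v\<bar>) ` V'. schur_weight D k)"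
      using that(2) by (simp add: sum.reindex)
    also have "\<dots> \<le> (\<Sum>k=0..n. schur_weight D k)"
    proof (rule sum_mono2)
      show "(\<lambda>v. nat \<bar>v\<bar>) ` V' \<subseteq> {0..n}"
        using that(1) assms(1) unfolding n_def by (auto intro!: member_le_sum)
    qed (use assms(2) schur_weight_nonneg in auto)
    also have "\<dots> \<le> 6" using assms(2) by (rule schur_weight_sum_le)
    finally show ?thesis .
  qed
  have "(\<Sum>v\<in>V. schur_weight D (nat \<bar>v\<bar>))
      = (\<Sum>v\<in>V \<inter> {v. v \<ge> 0}. schur_weight D (nat \<bar>v\<bar>)) + (\<Sum>v\<in>V - {v. v \<ge> 0}. schur_weight D (nat \<bar>v\<bar>))"
    using assms(1) by (rule sum.Int_Diff)
  also have "\<dots> \<le> 6 + 6"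
    by (intro add_mono half) (auto simp: inj_on_def)
  finally show ?thesis by simp
qed

lemma hilbert_inequality:
  fixes F :: "int \<Rightarrow> real"
  assumes "finite U"
  shows "(\<Sum>u\<in>U. \<Sum>v\<in>U. F u * F v / bracket_max u v) \<le> 12 * (\<Sum>u\<in>U. (F u)\<^sup>2)"
proof -
  \<comment> \<open>Schur test: AM-GM with ratio \<open>t = (\<langle>u\<rangle> / \<langle>v\<rangle>)\<^sup>1\<^sup>/\<^sup>2\<close> leaves only the row sums of \<open>\<rho>\<close>\<close>
  define \<rho> where "\<rho> u v = sqrt (int_bracket u / int_bracket v) / bracket_max u v" for u v
  have \<rho>_sum: "(\<Sum>v\<in>U. \<rho> u v) \<le> 12" for u
  proof -
    have "\<rho> u v = schur_weight (int_bracket u) (nat \<bar>v\<bar>)" for v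
      unfolding \<rho>_def schur_weight_def bracket_max_def int_bracket_def by simp
    then show ?thesis using sum_schur_weight_int_le[OF assms int_bracket_ge_1] by simp
  qed
  have pointwise: "F u * F v / bracket_max u v \<le> ((F u)\<^sup>2 * \<rho> u v + (F v)\<^sup>2 * \<rho> v u) / 2" for u v
  proof -
    define t where "t = sqrt (int_bracket u / int_bracket v)"
    have t0: "t > 0" unfolding t_def using int_bracket_ge_1[of u] int_bracket_ge_1[of v] by simp
    have "0 \<le> (F u * t - F v)\<^sup>2 / t" using t0 by simp
    then have "F u * F v \<le> ((F u)\<^sup>2 * t + (F v)\<^sup>2 / t) / 2"
      using t0 by (simp add: power2_eq_square field_simps)
    have \<rho>_t: "\<rho> u v = t / bracket_max u v" "\<rho> v u = 1 / t / bracket_max u v"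
      unfolding \<rho>_def t_def by (simp_all add: bracket_max_commute real_sqrt_divide)
    have "F u * F v / bracket_max u v \<le> ((F u)\<^sup>2 * t + (F v)\<^sup>2 / t) / 2 / bracket_max u v"
      using \<open>F u * F v \<le> _\<close> bracket_max_pos[of u v] by (intro divide_right_mono) auto
    also have "\<dots> = ((F u)\<^sup>2 * \<rho> u v + (F v)\<^sup>2 * \<rho> v u) / 2"
      unfolding \<rho>_t using t0 bracket_max_pos[of u v] by (simp add: field_simps)
    finally show ?thesis .
  qed
  have swap: "(\<Sum>u\<in>U. \<Sum>v\<in>U. (F v)\<^sup>2 * \<rho> v u) = (\<Sum>u\<in>U. \<Sum>v\<in>U. (F u)\<^sup>2 * \<rho> u v)"
    by (rule sum.swap)
  have "(\<Sum>u\<in>U. \<Sum>v\<in>U. F u * F v / bracket_max u v)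
      \<le> (\<Sum>u\<in>U. \<Sum>v\<in>U. ((F u)\<^sup>2 * \<rho> u v + (F v)\<^sup>2 * \<rho> v u) / 2)"
    by (intro sum_mono pointwise)
  also have "\<dots> = ((\<Sum>u\<in>U. \<Sum>v\<in>U. (F u)\<^sup>2 * \<rho> u v) + (\<Sum>u\<in>U. \<Sum>v\<in>U. (F v)\<^sup>2 * \<rho> v u)) / 2"
    by (simp add: sum.distrib add_divide_distrib sum_divide_distrib)
  also have "\<dots> = (\<Sum>u\<in>U. \<Sum>v\<in>U. (F u)\<^sup>2 * \<rho> u v)"
    unfolding swap by simp
  also have "\<dots> = (\<Sum>u\<in>U. (F u)\<^sup>2 * (\<Sum>v\<in>U. \<rho> u v))"
    by (simp add: sum_distrib_left)
  also have "\<dots> \<le> (\<Sum>u\<in>U. (F u)\<^sup>2 * 12)"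
    using \<rho>_sum by (intro sum_mono mult_left_mono) auto
  finally show ?thesis by (simp add: sum_distrib_left mult.commute)
qed

lemma sum_convolution_le:
  fixes G :: "int \<Rightarrow> real"
  assumes "finite V" and G_bound: "\<And>T. finite T \<Longrightarrow> (\<Sum>x\<in>T. (G x)\<^sup>2) \<le> E"
  shows "(\<Sum>w\<in>V. G w * G (- (c + w))) \<le> E"
proof -
  have "(\<Sum>w\<in>V. G w * G (- (c + w))) \<le> (\<Sum>w\<in>V. ((G w)\<^sup>2 + (G (- (c + w)))\<^sup>2) / 2)"
  proof (rule sum_mono)
    fix w
    show "G w * G (- (c + w)) \<le> ((G w)\<^sup>2 + (G (- (c + w)))\<^sup>2) / 2"
      using sum_squares_bound[of "G w" "G (- (c + w))"] by (simp add: power2_eq_square)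
  qed
  also have "\<dots> = (\<Sum>w\<in>V. (G w)\<^sup>2) / 2 + (\<Sum>y\<in>(\<lambda>w. - (c + w)) ` V. (G y)\<^sup>2) / 2"
    by (simp add: sum.distrib sum_divide_distrib add_divide_distrib sum.reindex inj_on_def)
  also have "\<dots> \<le> E / 2 + E / 2"
    using assms by (intro add_mono divide_right_mono G_bound) auto
  finally show ?thesis by simp
qed

text \<open>In \<open>quartic_term F G (p, q, r)\<close> the frequencies \<open>p, q\<close> are the light ones and \<open>r, -(p + q + r)\<close>
  the heavy ones; \<open>quartic_majorant\<close> runs over the six choices of the heavy pair.\<close>

definition quartic_term :: "(int \<Rightarrow> real) \<Rightarrow> (int \<Rightarrow> real) \<Rightarrow> int \<times> int \<times> int \<Rightarrow> real" where
  "quartic_term F G = (\<lambda>(p, q, r). F p * F q * G r * G (- (p + q + r)) / bracket_max p q)"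

lemma sum_quartic_term_le:
  fixes F G :: "int \<Rightarrow> real" and \<pi> :: "'x \<Rightarrow> int \<times> int \<times> int"
  assumes "finite S" "inj_on \<pi> S"
    and F_nonneg: "\<And>x. F x \<ge> 0" and G_nonneg: "\<And>x. G x \<ge> 0"
    and F_bound: "\<And>T. finite T \<Longrightarrow> (\<Sum>x\<in>T. (F x)\<^sup>2) \<le> L"
    and G_bound: "\<And>T. finite T \<Longrightarrow> (\<Sum>x\<in>T. (G x)\<^sup>2) \<le> E"
  shows "(\<Sum>x\<in>S. quartic_term F G (\<pi> x)) \<le> 12 * L * E"
proof -
  define T where "T = \<pi> ` S"
  define U where "U = fst ` T \<union> (fst \<circ> snd) ` T"
  define V where "V = (snd \<circ> snd) ` T"
  have "finite T" "finite U" "finite V" using assms(1) unfolding T_def U_def V_def by auto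
  have E_nonneg: "E \<ge> 0" using G_bound[of "{}"] by simp
  have "(\<Sum>x\<in>S. quartic_term F G (\<pi> x)) = (\<Sum>y\<in>T. quartic_term F G y)"
    unfolding T_def using assms(2) by (simp add: sum.reindex)
  also have "\<dots> \<le> (\<Sum>y\<in>U \<times> U \<times> V. quartic_term F G y)"
  proof (rule sum_mono2)
    show "T \<subseteq> U \<times> U \<times> V" unfolding U_def V_def by force
    show "0 \<le> quartic_term F G y" for y
      using F_nonneg G_nonneg bracket_max_pos
      by (auto simp: quartic_term_def split: prod.split intro!: divide_nonneg_pos)
  qed (use \<open>finite U\<close> \<open>finite V\<close> in auto)
  also have "\<dots> = (\<Sum>u\<in>U. \<Sum>v\<in>U. F u * F v / bracket_max u v * (\<Sum>w\<in>V. G w * G (- (u + v + w))))"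
    by (simp add: sum.cartesian_product quartic_term_def sum_distrib_left algebra_simps)
  also have "\<dots> \<le> (\<Sum>u\<in>U. \<Sum>v\<in>U. F u * F v / bracket_max u v * E)"
  proof (intro sum_mono mult_left_mono)
    show "(\<Sum>w\<in>V. G w * G (- (u + v + w))) \<le> E" for u v
      by (rule sum_convolution_le[OF \<open>finite V\<close> G_bound])
    show "0 \<le> F u * F v / bracket_max u v" for u v
      using F_nonneg bracket_max_pos[of u v] by simp
  qed
  also have "\<dots> = (\<Sum>u\<in>U. \<Sum>v\<in>U. F u * F v / bracket_max u v) * E"
    by (simp add: sum_distrib_right)
  also have "\<dots> \<le> 12 * (\<Sum>u\<in>U. (F u)\<^sup>2) * E"
    using hilbert_inequality[OF \<open>finite U\<close>] E_nonneg by (intro mult_right_mono) auto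
  also have "\<dots> \<le> 12 * L * E"
    using F_bound[OF \<open>finite U\<close>] E_nonneg by (intro mult_right_mono) auto
  finally show ?thesis .
qed

definition quartic_majorant :: "(int \<Rightarrow> real) \<Rightarrow> (int \<Rightarrow> real) \<Rightarrow> int \<times> int \<times> int \<times> int \<Rightarrow> real" where
  "quartic_majorant F G = (\<lambda>(x1, x2, x3, x4).
     quartic_term F G (x3, x4, x1) + quartic_term F G (x2, x4, x1) + quartic_term F G (x2, x3, x1) +
     quartic_term F G (x1, x4, x2) + quartic_term F G (x1, x3, x2) + quartic_term F G (x1, x2, x3))"

lemma Gamma4_sum_eq_0: "(x1, x2, x3, x4) \<in> Gamma4 \<Longrightarrow> x1 + x2 + x3 + x4 = 0"
  by (simp add: Gamma4_def)

lemma sum_quartic_majorant_le: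
  fixes F G :: "int \<Rightarrow> real"
  assumes "finite S" "S \<subseteq> Gamma4" and "\<And>x. F x \<ge> 0" "\<And>x. G x \<ge> 0"
    and "\<And>T. finite T \<Longrightarrow> (\<Sum>x\<in>T. (F x)\<^sup>2) \<le> L"
    and "\<And>T. finite T \<Longrightarrow> (\<Sum>x\<in>T. (G x)\<^sup>2) \<le> E"
  shows "(\<Sum>x\<in>S. quartic_majorant F G x) \<le> 72 * L * E"
proof -
  have bound: "(\<Sum>x\<in>S. quartic_term F G (\<pi> x)) \<le> 12 * L * E" if "inj_on \<pi> S" for \<pi>
    using sum_quartic_term_le[OF assms(1) that assms(3-6)] .
  have split: "(\<Sum>x\<in>S. quartic_majorant F G x) =
      (\<Sum>x\<in>S. quartic_term F G ((\<lambda>(x1, x2, x3, x4). (x3, x4, x1)) x)) +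
      (\<Sum>x\<in>S. quartic_term F G ((\<lambda>(x1, x2, x3, x4). (x2, x4, x1)) x)) +
      (\<Sum>x\<in>S. quartic_term F G ((\<lambda>(x1, x2, x3, x4). (x2, x3, x1)) x)) +
      (\<Sum>x\<in>S. quartic_term F G ((\<lambda>(x1, x2, x3, x4). (x1, x4, x2)) x)) +
      (\<Sum>x\<in>S. quartic_term F G ((\<lambda>(x1, x2, x3, x4). (x1, x3, x2)) x)) +
      (\<Sum>x\<in>S. quartic_term F G ((\<lambda>(x1, x2, x3, x4). (x1, x2, x3)) x))"
    unfolding quartic_majorant_def by (simp add: sum.distrib split_def)
  \<comment> \<open>on \<open>\<Gamma>\<^sub>4\<close> any three frequencies determine the fourth\<close>
  have "(\<Sum>x\<in>S. quartic_term F G ((\<lambda>(x1, x2, x3, x4). (x3, x4, x1)) x)) \<le> 12 * L * E"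
    by (rule bound, rule inj_on_inverseI[where g="\<lambda>(p, q, r). (r, - (p + q + r), p, q)"])
      (use assms(2) in \<open>fastforce dest: Gamma4_sum_eq_0\<close>)
  moreover have "(\<Sum>x\<in>S. quartic_term F G ((\<lambda>(x1, x2, x3, x4). (x2, x4, x1)) x)) \<le> 12 * L * E"
    by (rule bound, rule inj_on_inverseI[where g="\<lambda>(p, q, r). (r, p, - (p + q + r), q)"])
      (use assms(2) in \<open>fastforce dest: Gamma4_sum_eq_0\<close>)
  moreover have "(\<Sum>x\<in>S. quartic_term F G ((\<lambda>(x1, x2, x3, x4). (x2, x3, x1)) x)) \<le> 12 * L * E"
    by (rule bound, rule inj_on_inverseI[where g="\<lambda>(p, q, r). (r, p, q, - (p + q + r))"])
      (use assms(2) in \<open>fastforce dest: Gamma4_sum_eq_0\<close>)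
  moreover have "(\<Sum>x\<in>S. quartic_term F G ((\<lambda>(x1, x2, x3, x4). (x1, x4, x2)) x)) \<le> 12 * L * E"
    by (rule bound, rule inj_on_inverseI[where g="\<lambda>(p, q, r). (p, r, - (p + q + r), q)"])
      (use assms(2) in \<open>fastforce dest: Gamma4_sum_eq_0\<close>)
  moreover have "(\<Sum>x\<in>S. quartic_term F G ((\<lambda>(x1, x2, x3, x4). (x1, x3, x2)) x)) \<le> 12 * L * E"
    by (rule bound, rule inj_on_inverseI[where g="\<lambda>(p, q, r). (p, r, q, - (p + q + r))"])
      (use assms(2) in \<open>fastforce dest: Gamma4_sum_eq_0\<close>)
  moreover have "(\<Sum>x\<in>S. quartic_term F G ((\<lambda>(x1, x2, x3, x4). (x1, x2, x3)) x)) \<le> 12 * L * E"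
    by (rule bound, rule inj_on_inverseI[where g="\<lambda>(p, q, r). (p, q, r, - (p + q + r))"])
      (use assms(2) in \<open>fastforce dest: Gamma4_sum_eq_0\<close>)
  ultimately show ?thesis unfolding split by linarith
qed

lemma zero_sum_segment_bounds:
  fixes x1 x2 x3 x4 w :: real
  assumes "x1 + x2 + x3 + x4 = 0" "min x1 (- x4) \<le> w" "w \<le> max x1 (- x4)"
    and M: "M = max (max \<bar>x1\<bar> \<bar>x2\<bar>) (max \<bar>x3\<bar> \<bar>x4\<bar>)" "4 * \<bar>x2 + x3\<bar> \<le> M"
  shows "\<bar>w\<bar> \<le> M" "\<bar>w - (x1 + x2)\<bar> \<le> M" "M \<le> 2 * max \<bar>w\<bar> \<bar>w - (x1 + x2)\<bar>"
proof -
  define R where "R = max \<bar>w\<bar> \<bar>w - (x1 + x2)\<bar>"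
  define e where "e = \<bar>x2 + x3\<bar>"
  have x4: "x4 = - x1 - x2 - x3" using assms(1) by linarith
  have "\<bar>w\<bar> \<le> max \<bar>x1\<bar> \<bar>x4\<bar>" "\<bar>w - (x1 + x2)\<bar> \<le> max \<bar>x2\<bar> \<bar>x3\<bar>" "\<bar>w - x1\<bar> \<le> e"
    using assms(2,3) unfolding x4 e_def by (auto simp: min_def max_def split: if_splits)
  then show "\<bar>w\<bar> \<le> M" "\<bar>w - (x1 + x2)\<bar> \<le> M" unfolding M by (auto simp: le_max_iff_disj)
  have "\<bar>w\<bar> \<le> R" "\<bar>w - (x1 + x2)\<bar> \<le> R" unfolding R_def by auto
  then have "\<bar>x1\<bar> \<le> R + e" "\<bar>x2\<bar> \<le> R + e"
    using \<open>\<bar>w - x1\<bar> \<le> e\<close> by linarith+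
  moreover have "\<bar>x3\<bar> \<le> \<bar>x2\<bar> + e" "\<bar>x4\<bar> \<le> \<bar>x1\<bar> + e" "e \<ge> 0"
    unfolding x4 e_def by linarith+
  ultimately have "M \<le> R + 2 * e" unfolding M by simp
  moreover have "4 * e \<le> M" using M(2) unfolding e_def .
  ultimately show "M \<le> 2 * max \<bar>w\<bar> \<bar>w - (x1 + x2)\<bar>" unfolding R_def[symmetric] by linarith
qed

lemma zero_sum_two_large:
  fixes y1 y2 y3 y4 M :: real
  assumes "y1 + y2 + y3 + y4 = 0" and M: "M = max (max \<bar>y1\<bar> \<bar>y2\<bar>) (max \<bar>y3\<bar> \<bar>y4\<bar>)"
  shows "(M \<le> 3 * \<bar>y1\<bar> \<and> M \<le> 3 * \<bar>y2\<bar>) \<or> (M \<le> 3 * \<bar>y1\<bar> \<and> M \<le> 3 * \<bar>y3\<bar>) \<or>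
         (M \<le> 3 * \<bar>y1\<bar> \<and> M \<le> 3 * \<bar>y4\<bar>) \<or> (M \<le> 3 * \<bar>y2\<bar> \<and> M \<le> 3 * \<bar>y3\<bar>) \<or>
         (M \<le> 3 * \<bar>y2\<bar> \<and> M \<le> 3 * \<bar>y4\<bar>) \<or> (M \<le> 3 * \<bar>y3\<bar> \<and> M \<le> 3 * \<bar>y4\<bar>)"
proof -
  \<comment> \<open>the largest entry is at most the sum of the other three\<close>
  have "\<bar>y1\<bar> \<le> \<bar>y2\<bar> + \<bar>y3\<bar> + \<bar>y4\<bar>" "\<bar>y2\<bar> \<le> \<bar>y1\<bar> + \<bar>y3\<bar> + \<bar>y4\<bar>"
       "\<bar>y3\<bar> \<le> \<bar>y1\<bar> + \<bar>y2\<bar> + \<bar>y4\<bar>" "\<bar>y4\<bar> \<le> \<bar>y1\<bar> + \<bar>y2\<bar> + \<bar>y3\<bar>"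
    using assms(1) by (auto simp: abs_if)
  moreover have "M = \<bar>y1\<bar> \<or> M = \<bar>y2\<bar> \<or> M = \<bar>y3\<bar> \<or> M = \<bar>y4\<bar>"
    "\<bar>y1\<bar> \<le> M" "\<bar>y2\<bar> \<le> M" "\<bar>y3\<bar> \<le> M" "\<bar>y4\<bar> \<le> M"
    unfolding M by (auto simp: max_def)
  ultimately show ?thesis by linarith
qed

text \<open>\<open>sym_abs fc \<xi>\<close> majorises the moduli of the Fourier coefficients of both \<open>f\<close> and \<open>f\<close> conjugate at \<open>\<xi>\<close>.\<close>

definition sym_abs :: "(int \<Rightarrow> complex) \<Rightarrow> int \<Rightarrow> real" where
  "sym_abs fc x = max (cmod (fc x)) (cmod (fc (- x)))"

lemma sym_abs_nonneg: "sym_abs fc x \<ge> 0"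
  unfolding sym_abs_def by (simp add: le_max_iff_disj)

lemma sym_abs_sq_le: "(sym_abs fc x)\<^sup>2 \<le> (cmod (fc x))\<^sup>2 + (cmod (fc (- x)))\<^sup>2"
  unfolding sym_abs_def by (simp add: max_def)

lemma sum_reflect_le_infsum:
  fixes h :: "int \<Rightarrow> real"
  assumes "h summable_on UNIV" "\<And>x. h x \<ge> 0" "finite T"
  shows "(\<Sum>x\<in>T. h x + h (- x)) \<le> 2 * infsum h UNIV"
proof -
  have "(\<Sum>x\<in>T. h (- x)) = (\<Sum>y\<in>uminus ` T. h y)" by (simp add: sum.reindex)
  then have "(\<Sum>x\<in>T. h x + h (- x)) = (\<Sum>x\<in>T. h x) + (\<Sum>y\<in>uminus ` T. h y)"
    by (simp add: sum.distrib)
  also have "\<dots> \<le> infsum h UNIV + infsum h UNIV"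
    using assms by (intro add_mono finite_sum_le_infsum) auto
  finally show ?thesis by simp
qed

lemma sum_sym_abs_sq_le:
  assumes "(\<lambda>\<xi>. (cmod (fc \<xi>))\<^sup>2) summable_on UNIV" "finite T"
  shows "(\<Sum>x\<in>T. (sym_abs fc x)\<^sup>2) \<le> 2 * L2sq fc"
proof -
  have "(\<Sum>x\<in>T. (sym_abs fc x)\<^sup>2) \<le> (\<Sum>x\<in>T. (cmod (fc x))\<^sup>2 + (cmod (fc (- x)))\<^sup>2)"
    by (intro sum_mono sym_abs_sq_le)
  also have "\<dots> \<le> 2 * L2sq fc"
    unfolding L2sq_def using assms by (intro sum_reflect_le_infsum) auto
  finally show ?thesis .
qed

lemma L2sq_nonneg: "L2sq fc \<ge> 0"
  unfolding L2sq_def by (intro infsum_nonneg) auto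

lemma jbr_pos: "jbr x > 0"
  unfolding jbr_def by (simp add: add_pos_nonneg)

lemma abs_le_jbr: "\<bar>x\<bar> \<le> jbr x"
  unfolding jbr_def by (simp add: real_le_rsqrt)

definition b4_const :: "real \<Rightarrow> real \<Rightarrow> real" where
  "b4_const K \<beta> = \<bar>\<beta>\<bar> * ((4 + 10 * K)\<^sup>2 + 2 * (1 + K))"

locale admissible_symbol =
  fixes a :: "real \<Rightarrow> real" and K :: real
  assumes smooth: "smooth_fun a" and condA: "condA K a"
begin

lemma a_pos: "a x > 0"
  using condA unfolding condA_def by auto

lemma a_even: "a (- x) = a x"
  using condA unfolding condA_def by auto

lemma a_abs: "a \<bar>x\<bar> = a x"
  by (simp add: abs_if a_even)

lemma a_mono_abs:
  assumes "\<bar>x\<bar> \<le> \<bar>y\<bar>" shows "a x \<le> a y"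
proof -
  have "a \<bar>x\<bar> \<le> a \<bar>y\<bar>" using condA assms unfolding condA_def mono_on_def by auto
  then show ?thesis by (simp add: a_abs)
qed

lemma a_double_le: "x > 0 \<Longrightarrow> a (2 * x) \<le> K * a x"
  using condA unfolding condA_def by auto

lemma K_pos: "K > 0"
proof -
  have "0 < K * a 1" using a_double_le[of 1] a_pos[of 2] by simp
  then show ?thesis using a_pos[of 1] by (simp add: zero_less_mult_iff)
qed

lemma b4_const_nonneg: "b4_const K \<beta> \<ge> 0"
  unfolding b4_const_def using K_pos by simp

lemma a_le_K2: assumes "0 < M" "M \<le> 4 * \<bar>x\<bar>" shows "a M \<le> K\<^sup>2 * a x"
proof -
  have x: "\<bar>x\<bar> > 0" using assms by auto
  have "a M \<le> a (2 * (2 * \<bar>x\<bar>))" using assms by (intro a_mono_abs) auto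
  also have "\<dots> \<le> K * a (2 * \<bar>x\<bar>)" using x by (intro a_double_le) auto
  also have "\<dots> \<le> K * (K * a \<bar>x\<bar>)" using x K_pos by (intro mult_left_mono a_double_le) auto
  finally show ?thesis by (simp add: a_abs power2_eq_square)
qed

lemma iterated_deriv_a_has_deriv: "((deriv ^^ n) a has_real_derivative (deriv ^^ Suc n) a x) (at x)"
  using smooth unfolding smooth_fun_def by (simp add: DERIV_deriv_iff_real_differentiable)

lemma abs_iterated_deriv_a_le:
  assumes "j \<in> {1..5}"
  shows "\<bar>(deriv ^^ j) a x\<bar> \<le> K * a x / jbr x ^ j"
proof -
  have "\<bar>(deriv ^^ j) a x\<bar> \<le> K * jbr x powr (- real j) * a x"
    using condA assms unfolding condA_def by blast
  then show ?thesis using jbr_pos[of x] by (simp add: powr_minus powr_realpow divide_simps)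
qed

definition xa :: "real \<Rightarrow> real" where
  "xa x = x * a x"

definition xa' :: "real \<Rightarrow> real" where
  "xa' x = a x + x * deriv a x"

definition xa'' :: "real \<Rightarrow> real" where
  "xa'' x = 2 * deriv a x + x * deriv (deriv a) x"

lemma xa_has_deriv: "(xa has_real_derivative xa' x) (at x)"
  using iterated_deriv_a_has_deriv[of 0]
  unfolding xa_def xa'_def by (auto intro!: derivative_eq_intros)

lemma xa'_has_deriv: "(xa' has_real_derivative xa'' x) (at x)"
  using iterated_deriv_a_has_deriv[of 0] iterated_deriv_a_has_deriv[of 1]
  unfolding xa'_def xa''_def by (auto intro!: derivative_eq_intros)

lemma xa_minus: "xa (- x) = - xa x"
  unfolding xa_def by (simp add: a_even)

lemma abs_xa'_le: "\<bar>xa' x\<bar> \<le> (1 + K) * a x"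
proof -
  have "\<bar>x * deriv a x\<bar> \<le> jbr x * (K * a x / jbr x)"
    using abs_iterated_deriv_a_le[of 1 x] abs_le_jbr[of x] jbr_pos[of x] K_pos a_pos[of x]
    unfolding abs_mult by (intro mult_mono) auto
  also have "\<dots> = K * a x" using jbr_pos[of x] by simp
  finally have "\<bar>x * deriv a x\<bar> \<le> K * a x" .
  moreover have "\<bar>xa' x\<bar> \<le> \<bar>a x\<bar> + \<bar>x * deriv a x\<bar>"
    unfolding xa'_def by (rule abs_triangle_ineq)
  ultimately show ?thesis using a_pos[of x] by (simp add: distrib_right)
qed

lemma abs_xa''_le: "\<bar>xa'' x\<bar> \<le> 3 * K * a x / jbr x"
proof -
  have "\<bar>x * deriv (deriv a) x\<bar> \<le> jbr x * (K * a x / jbr x ^ 2)"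
    using abs_iterated_deriv_a_le[of 2 x] abs_le_jbr[of x] jbr_pos[of x] K_pos a_pos[of x]
    unfolding abs_mult by (intro mult_mono) (auto simp: numeral_2_eq_2)
  also have "\<dots> = K * a x / jbr x" using jbr_pos[of x] by (simp add: power2_eq_square)
  finally have "\<bar>x * deriv (deriv a) x\<bar> \<le> K * a x / jbr x" .
  moreover have "\<bar>2 * deriv a x\<bar> \<le> 2 * (K * a x / jbr x)"
    using abs_iterated_deriv_a_le[of 1 x] by simp
  moreover have "\<bar>xa'' x\<bar> \<le> \<bar>2 * deriv a x\<bar> + \<bar>x * deriv (deriv a) x\<bar>"
    unfolding xa''_def by (rule abs_triangle_ineq)
  ultimately show ?thesis by simp
qed

lemma qfun_eq:
  assumes "x1 + x2 \<noteq> 0"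
  shows "qfun a x1 x2 = (xa x1 + xa x2) / (x1 + x2)"
proof -
  define s where "s = x1 + x2"
  have "deriv (\<lambda>x. x * a x) y = xa' y" for y
    using xa_has_deriv[of y] unfolding xa_def by (simp add: DERIV_imp_deriv)
  then have "qfun a x1 x2 = integral {0..1} (\<lambda>t. xa' (- x2 + s * t))"
    unfolding qfun_def s_def by simp
  also have "\<dots> = xa (- x2 + s * 1) / s - xa (- x2 + s * 0) / s"
  proof (rule integral_unit_interval_eq)
    fix t
    have "((\<lambda>t. xa (- x2 + s * t)) has_real_derivative xa' (- x2 + s * t) * s) (at t)"
      by (rule DERIV_chain2[OF xa_has_deriv]) (auto intro!: derivative_eq_intros)
    from DERIV_cdivide[OF this, of s]
    show "((\<lambda>t. xa (- x2 + s * t) / s) has_real_derivative xa' (- x2 + s * t)) (at t)"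
      using assms unfolding s_def by simp
  qed
  finally show ?thesis
    unfolding s_def by (simp add: xa_minus diff_divide_distrib add_divide_distrib)
qed

lemma qfun_diff_eq:
  assumes "x1 + x2 + x3 + x4 = 0" "x1 + x2 \<noteq> 0"
  shows "(x1 + x2) * (qfun a x1 x2 - qfun a x3 x4) = xa x1 + xa x2 + xa x3 + xa x4"
proof -
  have "x3 + x4 = - (x1 + x2)" using assms(1) by linarith
  then have "qfun a x3 x4 = (xa x3 + xa x4) / (- (x1 + x2))"
    using qfun_eq[of x3 x4] assms(2) by simp
  then show ?thesis using qfun_eq[OF assms(2)] assms(2) by (simp add: field_simps)
qed

lemma dqfun_eq:
  assumes "y1 + y2 \<noteq> 0"
  shows "dqfun a y1 y2 = (xa' y1 - xa' y2) / (y1 + y2)"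
proof -
  have d1: "deriv (\<lambda>z. qfun a z y2) y1 = (xa' y1 * (y1 + y2) - (xa y1 + xa y2)) / (y1 + y2)\<^sup>2"
  proof (rule DERIV_imp_deriv, rule has_field_derivative_transform_within_open[where S="{z. z + y2 \<noteq> 0}"])
    show "((\<lambda>z. (xa z + xa y2) / (z + y2)) has_real_derivative
        (xa' y1 * (y1 + y2) - (xa y1 + xa y2)) / (y1 + y2)\<^sup>2) (at y1)"
      using assms by (auto intro!: derivative_eq_intros xa_has_deriv simp: power2_eq_square)
  qed (use assms qfun_eq in \<open>auto intro!: open_Collect_neq continuous_intros\<close>)
  have d2: "deriv (\<lambda>z. qfun a y1 z) y2 = (xa' y2 * (y1 + y2) - (xa y1 + xa y2)) / (y1 + y2)\<^sup>2"
  proof (rule DERIV_imp_deriv, rule has_field_derivative_transform_within_open[where S="{z. y1 + z \<noteq> 0}"])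
    show "((\<lambda>z. (xa y1 + xa z) / (y1 + z)) has_real_derivative
        (xa' y2 * (y1 + y2) - (xa y1 + xa y2)) / (y1 + y2)\<^sup>2) (at y2)"
      using assms by (auto intro!: derivative_eq_intros xa_has_deriv simp: power2_eq_square)
  qed (use assms qfun_eq in \<open>auto intro!: open_Collect_neq continuous_intros\<close>)
  show ?thesis
    unfolding dqfun_def d1 d2 using assms by (simp add: power2_eq_square divide_simps) (simp add: algebra_simps)
qed

lemma integral_dqfun_eq:
  assumes "x1 + x2 + x3 + x4 = 0" "x1 + x2 \<noteq> 0" "x2 + x3 \<noteq> 0"
  shows "integral {0..1} (\<lambda>t. dqfun a (x1 + (x2 + x3) * t) (x2 - (x2 + x3) * t))
       = - (xa x1 + xa x2 + xa x3 + xa x4) / ((x2 + x3) * (x1 + x2))"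
proof -
  define s m where "s = x1 + x2" and "m = x2 + x3"
  have s0: "s \<noteq> 0" and m0: "m \<noteq> 0" using assms unfolding s_def m_def by auto
  have ends: "x1 + m = - x4" "x2 - m = - x3" using assms(1) unfolding m_def by auto
  have "integral {0..1} (\<lambda>t. dqfun a (x1 + m * t) (x2 - m * t))
      = integral {0..1} (\<lambda>t. (xa' (x1 + m * t) - xa' (x2 - m * t)) / s)"
    using s0 by (simp add: dqfun_eq s_def algebra_simps)
  also have "\<dots> = (xa (x1 + m * 1) + xa (x2 - m * 1)) / (m * s) - (xa (x1 + m * 0) + xa (x2 - m * 0)) / (m * s)"
  proof (rule integral_unit_interval_eq)
    fix t
    have "((\<lambda>t. xa (x1 + m * t)) has_real_derivative xa' (x1 + m * t) * m) (at t)"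
         "((\<lambda>t. xa (x2 - m * t)) has_real_derivative xa' (x2 - m * t) * (- m)) (at t)"
      by (rule DERIV_chain2[OF xa_has_deriv]; auto intro!: derivative_eq_intros)+
    from DERIV_cdivide[OF DERIV_add[OF this], of "m * s"]
    show "((\<lambda>t. (xa (x1 + m * t) + xa (x2 - m * t)) / (m * s)) has_real_derivative
        (xa' (x1 + m * t) - xa' (x2 - m * t)) / s) (at t)"
      by (rule DERIV_cong) (use s0 m0 in \<open>simp add: divide_simps algebra_simps\<close>)
  qed
  also have "\<dots> = - (xa x1 + xa x2 + xa x3 + xa x4) / (m * s)"
    using ends by (simp add: xa_minus diff_divide_distrib[symmetric])
  finally show ?thesis unfolding s_def m_def .
qed

lemma norm_b4_eq:
  assumes "x1 + x2 + x3 + x4 = 0" "x1 + x2 \<noteq> 0" "x2 + x3 \<noteq> 0"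
  defines "A \<equiv> qfun a x1 x2" and "B \<equiv> qfun a x3 x4"
  shows "norm (b4 \<beta> a x1 x2 x3 x4) = \<bar>\<beta>\<bar> * (A - B)\<^sup>2 / (4 * \<bar>x2 + x3\<bar> * (sqrt A + sqrt B)\<^sup>2)"
proof -
  define s m where "s = x1 + x2" and "m = x2 + x3"
  have s0: "s \<noteq> 0" and m0: "m \<noteq> 0" using assms unfolding s_def m_def by auto
  have "xa x1 + xa x2 + xa x3 + xa x4 = s * (A - B)"
    using qfun_diff_eq[OF assms(1,2)] unfolding A_def B_def s_def by simp
  then have "- (xa x1 + xa x2 + xa x3 + xa x4) / (m * s) = - (A - B) / m"
    using s0 m0 by (simp add: minus_divide_left)
  then have "integral {0..1} (\<lambda>t. dqfun a (x1 + (x2 + x3) * t) (x2 - (x2 + x3) * t)) = - (A - B) / m"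
    using integral_dqfun_eq[OF assms(1-3)] unfolding s_def m_def by simp
  moreover define Q where "Q = (sqrt A + sqrt B)\<^sup>2"
  ultimately have "b4 \<beta> a x1 x2 x3 x4 = \<i> * complex_of_real (\<beta> * m / 4 * (- (A - B) / m)\<^sup>2 / Q)"
    unfolding b4_def A_def B_def m_def Q_def by simp
  also have "\<beta> * m / 4 * (- (A - B) / m)\<^sup>2 / Q = \<beta> * (A - B)\<^sup>2 / (4 * m * Q)"
    using m0 by (cases "Q = 0") (simp_all add: power2_eq_square field_simps)
  finally have "norm (b4 \<beta> a x1 x2 x3 x4) = \<bar>\<beta> * (A - B)\<^sup>2 / (4 * m * Q)\<bar>"
    by (simp only: norm_mult norm_ii norm_of_real mult_1_left)
  then show ?thesis
    unfolding m_def Q_def by (simp add: abs_mult del: distrib_left_numeral)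
qed

lemma xa_diff_ge_of_dominant:
  assumes "\<bar>v\<bar> \<le> u"
  shows "(u - v) * a u / 2 \<le> xa u - xa v"
proof (cases "v \<ge> 0")
  case True
  then have "v * a v \<le> v * a u" using assms by (intro mult_left_mono a_mono_abs) auto
  moreover have "(u - v) * a u / 2 \<le> (u - v) * a u" using assms a_pos[of u] by simp
  ultimately show ?thesis unfolding xa_def by (simp add: algebra_simps)
next
  case False
  then have "v * a v \<le> 0" using a_pos[of v] by (simp add: mult_nonpos_nonneg)
  moreover have "(u - v) * a u / 2 \<le> u * a u" using assms a_pos[of u] by simp
  ultimately show ?thesis unfolding xa_def by simp
qed

lemma xa_diff_quotient_ge:
  assumes "u \<noteq> v"
  shows "a (max \<bar>u\<bar> \<bar>v\<bar>) / 2 \<le> (xa u - xa v) / (u - v)"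
proof -
  have quot: "a p / 2 \<le> (xa p - xa q) / (p - q)" if "\<bar>q\<bar> \<le> p" "q \<noteq> p" for p q
    using xa_diff_ge_of_dominant[OF that(1)] that by (simp add: field_simps)
  have swap: "(xa v - xa u) / (v - u) = (xa u - xa v) / (u - v)"
    by (metis minus_diff_eq minus_divide_divide)
  consider "\<bar>v\<bar> \<le> u" | "\<bar>u\<bar> \<le> v" | "\<bar>v\<bar> \<le> - u" | "\<bar>u\<bar> \<le> - v" by linarith
  then show ?thesis
  proof cases
    case 1
    then show ?thesis using quot[of v u] assms by (simp add: max_def)
  next
    case 2
    then show ?thesis using quot[of u v] assms swap by (simp add: max_def)
  next
    case 3
    then show ?thesis using quot[of "- v" "- u"] assms swap by (simp add: max_def xa_minus a_even)
  next
    case 4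
    then show ?thesis using quot[of "- u" "- v"] assms by (simp add: max_def xa_minus a_even)
  qed
qed

lemma abs_xa_diff_quotient_le:
  assumes "u \<noteq> v"
  shows "\<bar>(xa u - xa v) / (u - v)\<bar> \<le> (1 + K) * a (max \<bar>u\<bar> \<bar>v\<bar>)"
proof -
  obtain w where w: "min u v \<le> w" "w \<le> max u v" "xa u - xa v = (u - v) * xa' w"
    using MVT_between[OF xa_has_deriv] by blast
  have "a w \<le> a (max \<bar>u\<bar> \<bar>v\<bar>)" using w by (intro a_mono_abs) auto
  then show ?thesis
    using w(3) assms abs_xa'_le[of w] K_pos by (simp add: order_trans[OF _ mult_left_mono])
qed

lemma qfun_ge:
  assumes "x1 + x2 \<noteq> 0"
  shows "a (max \<bar>x1\<bar> \<bar>x2\<bar>) / 2 \<le> qfun a x1 x2"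
  using xa_diff_quotient_ge[of x1 "- x2"] assms by (simp add: qfun_eq xa_minus)

lemma qfun_le:
  assumes "x1 + x2 \<noteq> 0" "\<bar>x1\<bar> \<le> M" "\<bar>x2\<bar> \<le> M"
  shows "qfun a x1 x2 \<le> (1 + K) * a M"
proof -
  have "qfun a x1 x2 \<le> (1 + K) * a (max \<bar>x1\<bar> \<bar>x2\<bar>)"
    using abs_le_D1[OF abs_xa_diff_quotient_le[of x1 "- x2"]] assms(1) by (simp add: qfun_eq xa_minus)
  also have "\<dots> \<le> (1 + K) * a M"
    using assms K_pos by (intro mult_left_mono a_mono_abs) auto
  finally show ?thesis .
qed

lemma qfun_pos: "x1 + x2 \<noteq> 0 \<Longrightarrow> qfun a x1 x2 > 0"
  using qfun_ge[of x1 x2] a_pos[of "max \<bar>x1\<bar> \<bar>x2\<bar>"] by linarith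

lemma abs_xa'_diff_le:
  assumes R: "R = max \<bar>y\<bar> \<bar>y - s\<bar>" "R > 0"
  shows "\<bar>xa' y - xa' (y - s)\<bar> \<le> (4 + 10 * K) * a R * \<bar>s\<bar> / R"
proof (cases "R \<le> 2 * \<bar>s\<bar>")
  case True
  have "\<bar>xa' y\<bar> \<le> (1 + K) * a R" "\<bar>xa' (y - s)\<bar> \<le> (1 + K) * a R"
    using abs_xa'_le[of y] abs_xa'_le[of "y - s"] a_mono_abs[of y R] a_mono_abs[of "y - s" R] R K_pos
    by (auto intro: order_trans[OF _ mult_left_mono])
  then have "\<bar>xa' y - xa' (y - s)\<bar> \<le> 2 * (1 + K) * a R * 1" by linarith
  also have "\<dots> \<le> 2 * (1 + K) * a R * (2 * \<bar>s\<bar> / R)"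
    using True R K_pos a_pos[of R] by (intro mult_left_mono) auto
  also have "\<dots> \<le> (4 + 10 * K) * a R * \<bar>s\<bar> / R"
    using R K_pos a_pos[of R] by (simp add: field_simps mult_right_mono)
  finally show ?thesis .
next
  case False
  \<comment> \<open>\<open>s\<close> is small compared with \<open>R\<close>, so the whole segment stays at distance \<open>\<ge> R/2\<close> from \<open>0\<close>\<close>
  obtain w where w: "min y (y - s) \<le> w" "w \<le> max y (y - s)" "xa' y - xa' (y - s) = s * xa'' w"
    using MVT_between[OF xa'_has_deriv, of y "y - s"] by auto
  have "\<bar>w\<bar> \<le> R" "R \<le> 2 * \<bar>w\<bar>" using w R False by (auto simp: min_def max_def abs_if split: if_splits)
  have "\<bar>xa'' w\<bar> \<le> 3 * K * a w / jbr w" by (rule abs_xa''_le)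
  also have "\<dots> \<le> 3 * K * a R / (R / 2)"
    using K_pos a_pos[of R] a_mono_abs[of w R] R abs_le_jbr[of w] \<open>\<bar>w\<bar> \<le> R\<close> \<open>R \<le> 2 * \<bar>w\<bar>\<close>
    by (intro frac_le) auto
  finally have "\<bar>xa'' w\<bar> \<le> 6 * K * a R / R" by simp
  then have "\<bar>s\<bar> * \<bar>xa'' w\<bar> \<le> \<bar>s\<bar> * (6 * K * a R / R)" by (rule mult_left_mono) simp
  also have "\<dots> \<le> (4 + 10 * K) * a R * \<bar>s\<bar> / R"
    using K_pos a_pos[of R] R by (simp add: field_simps mult_right_mono)
  finally show ?thesis using w(3) by (simp add: abs_mult)
qed

lemma qfun_diff_le:
  assumes "x1 + x2 + x3 + x4 = 0" "x1 + x2 \<noteq> 0"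
    and M: "M = max (max \<bar>x1\<bar> \<bar>x2\<bar>) (max \<bar>x3\<bar> \<bar>x4\<bar>)" "4 * \<bar>x2 + x3\<bar> \<le> M"
  shows "\<bar>qfun a x1 x2 - qfun a x3 x4\<bar> \<le> 2 * (4 + 10 * K) * \<bar>x2 + x3\<bar> * a M / M"
proof -
  define s m where "s = x1 + x2" and "m = x2 + x3"
  have s0: "s \<noteq> 0" using assms(2) unfolding s_def .
  have M_pos: "M > 0" using s0 unfolding M s_def by auto
  \<comment> \<open>\<open>s (A - B) = h \<xi>\<^sub>1 - h (\<xi>\<^sub>1 + \<xi>\<^sub>2\<^sub>3)\<close> with \<open>h y = y a(y) - (y - s) a(y - s)\<close>; apply the mean value theorem to \<open>h\<close>\<close>
  have ends: "x1 - s = - x2" "x1 + m = - x4" "- x4 - s = x3"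
    using assms(1) unfolding s_def m_def by linarith+
  have "s * (qfun a x1 x2 - qfun a x3 x4) = xa x1 + xa x2 + xa x3 + xa x4"
    using qfun_diff_eq[OF assms(1,2)] unfolding s_def .
  also have "\<dots> = (xa x1 - xa (x1 - s)) - (xa (x1 + m) - xa (x1 + m - s))"
    unfolding ends xa_minus by simp
  finally have key: "s * (qfun a x1 x2 - qfun a x3 x4) = (xa x1 - xa (x1 - s)) - (xa (x1 + m) - xa (x1 + m - s))" .
  have h_deriv: "((\<lambda>y. xa y - xa (y - s)) has_real_derivative xa' y - xa' (y - s)) (at y)" for y
    by (auto intro!: derivative_eq_intros xa_has_deriv DERIV_chain2[OF xa_has_deriv])
  obtain w where w: "min x1 (x1 + m) \<le> w" "w \<le> max x1 (x1 + m)"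
    "(xa x1 - xa (x1 - s)) - (xa (x1 + m) - xa (x1 + m - s)) = (x1 - (x1 + m)) * (xa' w - xa' (w - s))"
    using MVT_between[OF h_deriv, of x1 "x1 + m"] by blast
  define R where "R = max \<bar>w\<bar> \<bar>w - s\<bar>"
  have R: "R \<le> M" "M \<le> 2 * R"
    using zero_sum_segment_bounds[OF assms(1) _ _ M] w(1,2) ends(2) unfolding R_def s_def by auto
  have "\<bar>xa' w - xa' (w - s)\<bar> \<le> (4 + 10 * K) * a R * \<bar>s\<bar> / R"
    using R M_pos by (intro abs_xa'_diff_le) (auto simp: R_def)
  also have "\<dots> \<le> (4 + 10 * K) * a M * \<bar>s\<bar> / (M / 2)"
    using R M_pos K_pos a_pos[of M] a_mono_abs[of R M]
    by (intro frac_le mult_right_mono mult_left_mono) auto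
  finally have xa'_diff: "\<bar>xa' w - xa' (w - s)\<bar> \<le> (4 + 10 * K) * a M * \<bar>s\<bar> / (M / 2)" .
  have "\<bar>s\<bar> * \<bar>qfun a x1 x2 - qfun a x3 x4\<bar> = \<bar>m\<bar> * \<bar>xa' w - xa' (w - s)\<bar>"
    using key w(3) by (simp add: abs_mult[symmetric])
  also have "\<dots> \<le> \<bar>m\<bar> * ((4 + 10 * K) * a M * \<bar>s\<bar> / (M / 2))"
    using xa'_diff by (rule mult_left_mono) simp
  also have "\<dots> = \<bar>s\<bar> * (2 * (4 + 10 * K) * \<bar>m\<bar> * a M / M)"
    by simp
  finally have "\<bar>s\<bar> * \<bar>qfun a x1 x2 - qfun a x3 x4\<bar> \<le> \<bar>s\<bar> * (2 * (4 + 10 * K) * \<bar>m\<bar> * a M / M)" .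
  from mult_left_le_imp_le[OF this] show ?thesis using s0 unfolding m_def by simp
qed

lemma qfun_sum_bounds:
  assumes "x1 + x2 + x3 + x4 = 0" "x1 + x2 \<noteq> 0"
    and M: "M = max (max \<bar>x1\<bar> \<bar>x2\<bar>) (max \<bar>x3\<bar> \<bar>x4\<bar>)"
  shows "a M / 2 \<le> qfun a x1 x2 + qfun a x3 x4" "qfun a x1 x2 + qfun a x3 x4 \<le> 2 * (1 + K) * a M"
proof -
  have "x3 + x4 \<noteq> 0" using assms(1,2) by linarith
  show "a M / 2 \<le> qfun a x1 x2 + qfun a x3 x4"
    using qfun_ge[OF assms(2)] qfun_ge[OF \<open>x3 + x4 \<noteq> 0\<close>] qfun_pos[OF assms(2)] qfun_pos[OF \<open>x3 + x4 \<noteq> 0\<close>]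
    unfolding M by (auto simp: max_def)
  have M_ge: "\<bar>x1\<bar> \<le> M" "\<bar>x2\<bar> \<le> M" "\<bar>x3\<bar> \<le> M" "\<bar>x4\<bar> \<le> M"
    unfolding M by (simp_all add: le_max_iff_disj)
  show "qfun a x1 x2 + qfun a x3 x4 \<le> 2 * (1 + K) * a M"
    using qfun_le[OF assms(2) M_ge(1,2)] qfun_le[OF \<open>x3 + x4 \<noteq> 0\<close> M_ge(3,4)] by linarith
qed

lemma qfun_diff_sq_div_sum_le:
  assumes "x1 + x2 + x3 + x4 = 0" "x1 + x2 \<noteq> 0"
    and M: "M = max (max \<bar>x1\<bar> \<bar>x2\<bar>) (max \<bar>x3\<bar> \<bar>x4\<bar>)"
  defines "A \<equiv> qfun a x1 x2" and "B \<equiv> qfun a x3 x4"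
  shows "(A - B)\<^sup>2 / (A + B) \<le> 4 * \<bar>x2 + x3\<bar> * (((4 + 10 * K)\<^sup>2 + 2 * (1 + K)) * a M / M)"
proof -
  define m C where "m = x2 + x3" and "C = 4 + 10 * K"
  have M_pos: "M > 0" using assms(2) unfolding M by auto
  have "x3 + x4 \<noteq> 0" using assms(1,2) by linarith
  have "A > 0" "B > 0" unfolding A_def B_def by (fact qfun_pos[OF assms(2)], fact qfun_pos[OF \<open>x3 + x4 \<noteq> 0\<close>])
  note sum_bounds = qfun_sum_bounds[OF assms(1,2) M, folded A_def B_def]
  \<comment> \<open>near the diagonal \<open>\<xi>\<^sub>2\<^sub>3 = 0\<close> the mean value theorem makes \<open>A - B\<close> small, away from it the crude bound suffices\<close>
  have "(A - B)\<^sup>2 / (A + B) \<le> 4 * \<bar>m\<bar> * ((C\<^sup>2 + 2 * (1 + K)) * a M / M)"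
  proof (cases "4 * \<bar>m\<bar> \<le> M")
    case True
    have "\<bar>A - B\<bar> \<le> 2 * C * \<bar>m\<bar> * a M / M"
      using qfun_diff_le[OF assms(1,2) M] True unfolding A_def B_def C_def m_def by simp
    then have "(A - B)\<^sup>2 \<le> (2 * C * \<bar>m\<bar> * a M / M)\<^sup>2"
      by (metis abs_ge_zero order_trans power2_abs power_mono)
    then have "(A - B)\<^sup>2 / (A + B) \<le> (2 * C * \<bar>m\<bar> * a M / M)\<^sup>2 / (a M / 2)"
      using sum_bounds(1) a_pos[of M] by (intro frac_le) auto
    also have "\<dots> = 4 * \<bar>m\<bar> * (C\<^sup>2 * a M / M * (2 * \<bar>m\<bar> / M))"
      using a_pos[of M] M_pos by (simp add: power2_eq_square field_simps)
    also have "\<dots> \<le> 4 * \<bar>m\<bar> * (C\<^sup>2 * a M / M)"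
      using True M_pos a_pos[of M] by (intro mult_left_mono mult_left_le) auto
    also have "\<dots> \<le> 4 * \<bar>m\<bar> * ((C\<^sup>2 + 2 * (1 + K)) * a M / M)"
      using K_pos a_pos[of M] M_pos by (intro mult_left_mono divide_right_mono mult_right_mono) auto
    finally show ?thesis .
  next
    case False
    have "(A - B)\<^sup>2 / (A + B) \<le> A + B"
      using \<open>A > 0\<close> \<open>B > 0\<close> by (simp add: power2_eq_square divide_simps algebra_simps)
    also have "\<dots> \<le> 2 * (1 + K) * a M" by (fact sum_bounds(2))
    also have "\<dots> = M * (2 * (1 + K) * a M / M)" using M_pos by simp
    also have "\<dots> \<le> 4 * \<bar>m\<bar> * (2 * (1 + K) * a M / M)"
      using False M_pos K_pos a_pos[of M] by (intro mult_right_mono) auto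
    also have "\<dots> \<le> 4 * \<bar>m\<bar> * ((C\<^sup>2 + 2 * (1 + K)) * a M / M)"
      using M_pos a_pos[of M] by (intro mult_left_mono divide_right_mono mult_right_mono) auto
    finally show ?thesis .
  qed
  then show ?thesis unfolding m_def C_def .
qed

lemma norm_b4_le:
  assumes "x1 + x2 + x3 + x4 = 0" "x1 + x2 \<noteq> 0" "x2 + x3 \<noteq> 0"
    and M: "M = max (max \<bar>x1\<bar> \<bar>x2\<bar>) (max \<bar>x3\<bar> \<bar>x4\<bar>)"
  shows "norm (b4 \<beta> a x1 x2 x3 x4) \<le> b4_const K \<beta> * a M / M"
proof -
  define A B where "A = qfun a x1 x2" and "B = qfun a x3 x4"
  have "x3 + x4 \<noteq> 0" using assms(1,2) by linarith
  have "A > 0" "B > 0" unfolding A_def B_def by (fact qfun_pos[OF assms(2)], fact qfun_pos[OF \<open>x3 + x4 \<noteq> 0\<close>])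
  then have "A + B \<le> (sqrt A + sqrt B)\<^sup>2" by (simp add: power2_eq_square algebra_simps)
  then have "norm (b4 \<beta> a x1 x2 x3 x4) \<le> \<bar>\<beta>\<bar> * (A - B)\<^sup>2 / (4 * \<bar>x2 + x3\<bar> * (A + B))"
    unfolding norm_b4_eq[OF assms(1-3)] A_def[symmetric] B_def[symmetric]
    using \<open>A > 0\<close> \<open>B > 0\<close> assms(3) by (intro divide_left_mono mult_left_mono mult_pos_pos) auto
  also have "\<dots> = \<bar>\<beta>\<bar> * ((A - B)\<^sup>2 / (A + B) / (4 * \<bar>x2 + x3\<bar>))" by simp
  also have "\<dots> \<le> \<bar>\<beta>\<bar> * (((4 + 10 * K)\<^sup>2 + 2 * (1 + K)) * a M / M)"
    using divide_right_mono[OF qfun_diff_sq_div_sum_le[OF assms(1,2) M], of "4 * \<bar>x2 + x3\<bar>"] assms(3)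
    unfolding A_def B_def by (intro mult_left_mono) auto
  finally show ?thesis unfolding b4_const_def by simp
qed

lemma sum_weighted_sym_abs_sq_le:
  assumes "(\<lambda>\<xi>. a (of_int \<xi>) * (cmod (fc \<xi>))\<^sup>2) summable_on UNIV" "finite T"
  shows "(\<Sum>x\<in>T. (sqrt (a (of_int x)) * sym_abs fc x)\<^sup>2) \<le> 2 * E0 a fc"
proof -
  have "(sqrt (a (of_int x)) * sym_abs fc x)\<^sup>2 = a (of_int x) * (sym_abs fc x)\<^sup>2" for x
    using a_pos[of "of_int x"] by (simp add: power_mult_distrib)
  also have "\<dots> x \<le> a (of_int x) * (cmod (fc x))\<^sup>2 + a (of_int (- x)) * (cmod (fc (- x)))\<^sup>2" for x
    using mult_left_mono[OF sym_abs_sq_le, of "a (of_int x)"] a_pos[of "of_int x"] a_even[of "of_int x"]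
    by (simp add: algebra_simps)
  finally have "(\<Sum>x\<in>T. (sqrt (a (of_int x)) * sym_abs fc x)\<^sup>2)
      \<le> (\<Sum>x\<in>T. a (of_int x) * (cmod (fc x))\<^sup>2 + a (of_int (- x)) * (cmod (fc (- x)))\<^sup>2)"
    by (intro sum_mono)
  also have "\<dots> \<le> 2 * E0 a fc"
    unfolding E0_def using assms a_pos by (intro sum_reflect_le_infsum) (auto intro!: mult_nonneg_nonneg intro: less_imp_le)
  finally show ?thesis .
qed

lemma a_div_max_le_quartic_term:
  fixes F :: "int \<Rightarrow> real" and xi xj xk xl :: int
  assumes F_nonneg: "\<And>x. F x \<ge> 0" and "M \<ge> 1"
    and large: "M \<le> 3 * \<bar>real_of_int xi\<bar>" "M \<le> 3 * \<bar>real_of_int xj\<bar>"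
    and small: "\<bar>real_of_int xk\<bar> \<le> M" "\<bar>real_of_int xl\<bar> \<le> M"
    and "xj = - (xk + xl + xi)"
  shows "a M / M * (F xi * F xj * F xk * F xl)
    \<le> K\<^sup>2 * quartic_term F (\<lambda>x. sqrt (a (of_int x)) * F x) (xk, xl, xi)"
proof -
  define ai aj where "ai = a (of_int xi)" and "aj = a (of_int xj)"
  have "ai > 0" "aj > 0" unfolding ai_def aj_def using a_pos by auto
  \<comment> \<open>the two large frequencies carry the weight, the two small ones the decay \<open>1/M\<close>\<close>
  have "a M * a M \<le> (K\<^sup>2 * ai) * (K\<^sup>2 * aj)"
    unfolding ai_def aj_def using a_pos[of M] \<open>M \<ge> 1\<close> large
    by (intro mult_mono a_le_K2) (auto intro!: mult_nonneg_nonneg less_imp_le[OF a_pos])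
  then have "sqrt (a M * a M) \<le> sqrt ((K\<^sup>2 * ai) * (K\<^sup>2 * aj))" by (rule real_sqrt_le_mono)
  also have "\<dots> = K\<^sup>2 * (sqrt ai * sqrt aj)"
    using \<open>ai > 0\<close> \<open>aj > 0\<close> by (simp add: real_sqrt_mult real_sqrt_abs power2_eq_square)
  finally have "a M \<le> K\<^sup>2 * (sqrt ai * sqrt aj)" using a_pos[of M] by simp
  moreover have "bracket_max xk xl \<le> M"
    unfolding bracket_max_def int_bracket_def using small \<open>M \<ge> 1\<close> by simp
  ultimately have "a M / M \<le> K\<^sup>2 * (sqrt ai * sqrt aj) / bracket_max xk xl"
    using a_pos[of M] bracket_max_pos[of xk xl] by (intro frac_le) auto
  then have "a M / M * (F xi * F xj * F xk * F xl)
      \<le> K\<^sup>2 * (sqrt ai * sqrt aj) / bracket_max xk xl * (F xi * F xj * F xk * F xl)"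
    using F_nonneg by (intro mult_right_mono) auto
  also have "\<dots> = K\<^sup>2 * quartic_term F (\<lambda>x. sqrt (a (of_int x)) * F x) (xk, xl, xi)"
    unfolding quartic_term_def prod.case \<open>xj = _\<close>[symmetric] ai_def aj_def by (simp add: mult_ac)
  finally show ?thesis .
qed

lemma a_div_max_le_quartic_majorant:
  fixes F :: "int \<Rightarrow> real" and x1 x2 x3 x4 :: int
  assumes F_nonneg: "\<And>y. F y \<ge> 0" and sum0: "x1 + x2 + x3 + x4 = 0"
    and M: "M = max (max \<bar>real_of_int x1\<bar> \<bar>real_of_int x2\<bar>) (max \<bar>real_of_int x3\<bar> \<bar>real_of_int x4\<bar>)" "M \<ge> 1"
  defines "G \<equiv> \<lambda>x. sqrt (a (of_int x)) * F x"
  shows "a M / M * (F x1 * F x2 * F x3 * F x4) \<le> K\<^sup>2 * quartic_majorant F G (x1, x2, x3, x4)"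
proof -
  have small: "\<bar>real_of_int x1\<bar> \<le> M" "\<bar>real_of_int x2\<bar> \<le> M" "\<bar>real_of_int x3\<bar> \<le> M" "\<bar>real_of_int x4\<bar> \<le> M"
    unfolding M(1) by (simp_all add: le_max_iff_disj)
  have "quartic_term F G y \<ge> 0" for y
    using F_nonneg bracket_max_pos a_pos unfolding quartic_term_def G_def
    by (auto split: prod.split intro!: divide_nonneg_pos mult_nonneg_nonneg intro: less_imp_le)
  then have terms: "quartic_term F G (x3, x4, x1) \<le> quartic_majorant F G (x1, x2, x3, x4)"
    "quartic_term F G (x2, x4, x1) \<le> quartic_majorant F G (x1, x2, x3, x4)"
    "quartic_term F G (x2, x3, x1) \<le> quartic_majorant F G (x1, x2, x3, x4)"
    "quartic_term F G (x1, x4, x2) \<le> quartic_majorant F G (x1, x2, x3, x4)"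
    "quartic_term F G (x1, x3, x2) \<le> quartic_majorant F G (x1, x2, x3, x4)"
    "quartic_term F G (x1, x2, x3) \<le> quartic_majorant F G (x1, x2, x3, x4)"
    unfolding quartic_majorant_def by (simp_all add: add_increasing add_increasing2)
  have via_term: "a M / M * (F x1 * F x2 * F x3 * F x4) \<le> K\<^sup>2 * quartic_majorant F G (x1, x2, x3, x4)"
    if "a M / M * (F x1 * F x2 * F x3 * F x4) \<le> K\<^sup>2 * t" "t \<le> quartic_majorant F G (x1, x2, x3, x4)" for t
    by (rule order_trans[OF that(1) mult_left_mono[OF that(2)]]) simp
  note bound = a_div_max_le_quartic_term[of F, OF F_nonneg \<open>M \<ge> 1\<close>, folded G_def]
  have "real_of_int x1 + real_of_int x2 + real_of_int x3 + real_of_int x4 = 0"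
    using sum0 by (simp flip: of_int_add)
  from zero_sum_two_large[OF this M(1)] show ?thesis
  proof (elim disjE conjE)
    assume "M \<le> 3 * \<bar>real_of_int x1\<bar>" "M \<le> 3 * \<bar>real_of_int x2\<bar>"
    from bound[OF this small(3,4)] sum0 show ?thesis
      by (intro via_term[OF _ terms(1)]) (simp add: eq_neg_iff_add_eq_0 ac_simps)
  next
    assume "M \<le> 3 * \<bar>real_of_int x1\<bar>" "M \<le> 3 * \<bar>real_of_int x3\<bar>"
    from bound[OF this small(2,4)] sum0 show ?thesis
      by (intro via_term[OF _ terms(2)]) (simp add: eq_neg_iff_add_eq_0 ac_simps)
  next
    assume "M \<le> 3 * \<bar>real_of_int x1\<bar>" "M \<le> 3 * \<bar>real_of_int x4\<bar>"
    from bound[OF this small(2,3)] sum0 show ?thesis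
      by (intro via_term[OF _ terms(3)]) (simp add: eq_neg_iff_add_eq_0 ac_simps)
  next
    assume "M \<le> 3 * \<bar>real_of_int x2\<bar>" "M \<le> 3 * \<bar>real_of_int x3\<bar>"
    from bound[OF this small(1,4)] sum0 show ?thesis
      by (intro via_term[OF _ terms(4)]) (simp add: eq_neg_iff_add_eq_0 ac_simps)
  next
    assume "M \<le> 3 * \<bar>real_of_int x2\<bar>" "M \<le> 3 * \<bar>real_of_int x4\<bar>"
    from bound[OF this small(1,3)] sum0 show ?thesis
      by (intro via_term[OF _ terms(5)]) (simp add: eq_neg_iff_add_eq_0 ac_simps)
  next
    assume "M \<le> 3 * \<bar>real_of_int x3\<bar>" "M \<le> 3 * \<bar>real_of_int x4\<bar>"
    from bound[OF this small(1,2)] sum0 show ?thesis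
      by (intro via_term[OF _ terms(6)]) (simp add: eq_neg_iff_add_eq_0 ac_simps)
  qed
qed

lemma norm_E1_summand_le:
  assumes "x \<in> Gamma4"
  shows "norm (E1_summand \<beta> a fc x)
    \<le> b4_const K \<beta> * K\<^sup>2 * quartic_majorant (sym_abs fc) (\<lambda>x. sqrt (a (of_int x)) * sym_abs fc x) x"
proof -
  obtain x1 x2 x3 x4 where x: "x = (x1, x2, x3, x4)" by (cases x)
  define F where "F = sym_abs fc"
  define M where "M = max (max \<bar>real_of_int x1\<bar> \<bar>real_of_int x2\<bar>) (max \<bar>real_of_int x3\<bar> \<bar>real_of_int x4\<bar>)"
  have sum0: "x1 + x2 + x3 + x4 = 0" and "x1 + x2 \<noteq> 0" "x2 + x3 \<noteq> 0"
    using assms unfolding x Gamma4_def by auto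
  then have sum0_real: "real_of_int x1 + real_of_int x2 + real_of_int x3 + real_of_int x4 = 0"
    and nonzero_real: "real_of_int x1 + real_of_int x2 \<noteq> 0" "real_of_int x2 + real_of_int x3 \<noteq> 0"
    by (simp_all flip: of_int_add)
  have "x1 \<noteq> 0 \<or> x2 \<noteq> 0" using \<open>x1 + x2 \<noteq> 0\<close> by auto
  then have "M \<ge> 1" unfolding M_def by (auto simp: le_max_iff_disj)
  have F_nonneg: "F y \<ge> 0" for y unfolding F_def by (rule sym_abs_nonneg)
  have "norm (E1_summand \<beta> a fc x) = norm (b4 \<beta> a x1 x2 x3 x4) * norm (of_int (sgn (x1 + x2)) :: complex)
      * (cmod (fc x1) * cmod (fc (- x2)) * cmod (fc x3) * cmod (fc (- x4)))"
    unfolding x E1_summand_def conj_hat_def by (simp add: norm_mult)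
  also have "\<dots> \<le> norm (b4 \<beta> a x1 x2 x3 x4) * 1 * (F x1 * F x2 * F x3 * F x4)"
  proof (intro mult_mono mult_left_mono)
    show "cmod (fc x1) \<le> F x1" "cmod (fc (- x2)) \<le> F x2" "cmod (fc x3) \<le> F x3" "cmod (fc (- x4)) \<le> F x4"
      unfolding F_def sym_abs_def by auto
  qed (auto simp: sgn_if F_nonneg)
  also have "\<dots> \<le> b4_const K \<beta> * a M / M * (F x1 * F x2 * F x3 * F x4)"
    using norm_b4_le[OF sum0_real nonzero_real M_def] F_nonneg by (intro mult_right_mono) auto
  also have "\<dots> = b4_const K \<beta> * (a M / M * (F x1 * F x2 * F x3 * F x4))" by simp
  also have "\<dots> \<le> b4_const K \<beta> * (K\<^sup>2 * quartic_majorant F (\<lambda>x. sqrt (a (of_int x)) * F x) x)"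
    unfolding x using a_div_max_le_quartic_majorant[OF F_nonneg sum0 M_def \<open>M \<ge> 1\<close>] b4_const_nonneg
    by (rule mult_left_mono)
  finally show ?thesis unfolding F_def by (simp add: mult.assoc)
qed

lemma E0_nonneg: "E0 a fc \<ge> 0"
  unfolding E0_def using a_pos by (intro infsum_nonneg) (auto intro!: mult_nonneg_nonneg intro: less_imp_le)

lemma E1_summable_and_bound:
  assumes "(\<lambda>\<xi>. (cmod (fc \<xi>))\<^sup>2) summable_on UNIV"
    and "(\<lambda>\<xi>. a (of_int \<xi>) * (cmod (fc \<xi>))\<^sup>2) summable_on UNIV"
  shows "E1_summand \<beta> a fc summable_on Gamma4"
    and "cmod (E1 \<beta> a fc) \<le> 288 * b4_const K \<beta> * K\<^sup>2 * L2sq fc * E0 a fc"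
proof -
  define F G where "F = sym_abs fc" and "G = (\<lambda>x. sqrt (a (of_int x)) * sym_abs fc x)"
  have "(\<Sum>x\<in>S. norm (E1_summand \<beta> a fc x)) \<le> 288 * b4_const K \<beta> * K\<^sup>2 * L2sq fc * E0 a fc"
    if "finite S" "S \<subseteq> Gamma4" for S
  proof -
    have "(\<Sum>x\<in>S. norm (E1_summand \<beta> a fc x)) \<le> (\<Sum>x\<in>S. b4_const K \<beta> * K\<^sup>2 * quartic_majorant F G x)"
      unfolding F_def G_def using that by (intro sum_mono norm_E1_summand_le) auto
    also have "\<dots> = b4_const K \<beta> * K\<^sup>2 * (\<Sum>x\<in>S. quartic_majorant F G x)"
      by (simp add: sum_distrib_left)
    also have "\<dots> \<le> b4_const K \<beta> * K\<^sup>2 * (72 * (2 * L2sq fc) * (2 * E0 a fc))"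
    proof (intro mult_left_mono sum_quartic_majorant_le that)
      show "F y \<ge> 0" "G y \<ge> 0" for y
        unfolding F_def G_def using sym_abs_nonneg a_pos[of "of_int y"] by simp_all
      show "(\<Sum>x\<in>T. (F x)\<^sup>2) \<le> 2 * L2sq fc" "(\<Sum>x\<in>T. (G x)\<^sup>2) \<le> 2 * E0 a fc" if "finite T" for T
        unfolding F_def G_def using sum_sym_abs_sq_le[OF assms(1) that] sum_weighted_sym_abs_sq_le[OF assms(2) that] .
    qed (use b4_const_nonneg in simp)
    finally show ?thesis by simp
  qed
  note partial_sums = this
  show "E1_summand \<beta> a fc summable_on Gamma4"
    by (rule summable_on_norm_infsum_le(1)[OF partial_sums])
  show "cmod (E1 \<beta> a fc) \<le> 288 * b4_const K \<beta> * K\<^sup>2 * L2sq fc * E0 a fc"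
    unfolding E1_def by (rule summable_on_norm_infsum_le(2)[OF partial_sums])
qed

end

theorem lemma4p5:
  fixes \<beta> K :: real
  shows "\<exists>C>0. \<forall>(a :: real \<Rightarrow> real) (fc :: int \<Rightarrow> complex).
           smooth_fun a \<longrightarrow> condA K a \<longrightarrow>
           (\<lambda>\<xi>. (cmod (fc \<xi>))\<^sup>2) summable_on UNIV \<longrightarrow>
           (\<lambda>\<xi>. a (of_int \<xi>) * (cmod (fc \<xi>))\<^sup>2) summable_on UNIV \<longrightarrow>
           (E1_summand \<beta> a fc summable_on Gamma4 \<and>
            cmod (E1 \<beta> a fc) \<le> C * L2sq fc * E0 a fc)"
proof (intro exI[of _ "max 1 (288 * b4_const K \<beta> * K\<^sup>2)"] conjI allI impI)
  fix a :: "real \<Rightarrow> real" and fc :: "int \<Rightarrow> complex"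
  assume "smooth_fun a" "condA K a"
    and summable: "(\<lambda>\<xi>. (cmod (fc \<xi>))\<^sup>2) summable_on UNIV"
      "(\<lambda>\<xi>. a (of_int \<xi>) * (cmod (fc \<xi>))\<^sup>2) summable_on UNIV"
  then interpret admissible_symbol a K by unfold_locales
  show "E1_summand \<beta> a fc summable_on Gamma4"
    using summable by (rule E1_summable_and_bound)
  have "cmod (E1 \<beta> a fc) \<le> 288 * b4_const K \<beta> * K\<^sup>2 * (L2sq fc * E0 a fc)"
    using E1_summable_and_bound(2)[OF summable] by (simp add: mult.assoc)
  also have "\<dots> \<le> max 1 (288 * b4_const K \<beta> * K\<^sup>2) * (L2sq fc * E0 a fc)"
    using L2sq_nonneg E0_nonneg by (intro mult_right_mono) auto
  finally show "cmod (E1 \<beta> a fc) \<le> max 1 (288 * b4_const K \<beta> * K\<^sup>2) * L2sq fc * E0 a fc"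
    by (simp add: mult.assoc)
qed simp

end
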